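(* Let $\mathbb{Q}_2=\mathbb{Q}\times\mathbb{Q}$ and $$A:=\Big(\bigcup_{\mathbf{v}\in\mathbb{Q}_2}S(\mathbf{v},1)\Big)^c,\qquad S(\mathbf{v},1)=\{x\in\mathbb{R}^2:|x-\mathbf{v}|=1\}.$$ Then $A$ is a dense $G_\delta$ subset of $\mathbb{R}^2$ whose complement has two-dimensional Lebesgue measure zero, and $(A+S^1)\cap\mathbb{Q}_2=\emptyset$; in particular $A+S^1$ has empty interior.
   Context: $S^1$ is the Euclidean unit circle; $X+Y=\{x+y:x\in X,y\in Y\}$. *)

theory Defs
  imports "HOL-Analysis.Analysis" "HOL-Library.Set_Algebras"
begin

definition Q2 :: "(real^2) set" where
  "Q2 = {v. \<forall>i. v $ i \<in> \<rat>}"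

definition Aset :: "(real^2) set" where
  "Aset = - (\<Union>v\<in>Q2. sphere v 1)"

end

theory Submission
  imports Defs
begin

text \<open>Every point of \<open>A + S\<^sup>1\<close> is at distance 1 from a point of \<open>A\<close>, so a rational point in
  \<open>A + S\<^sup>1\<close> would put a point of \<open>A\<close> on the unit circle around it, contrary to the definition
  of \<open>A\<close>. As \<open>\<rat>\<^sup>2\<close> is dense, \<open>A + S\<^sup>1\<close> therefore has empty interior. The complement of \<open>A\<close>
  is a countable union of circles, which are closed and null, so \<open>A\<close> is a co-null, hence
  dense, \<open>G\<^sub>\<delta>\<close> set.\<close>

lemma countable_rational_vectors: "countable {v :: real^'n. \<forall>i. v $ i \<in> \<rat>}"
proof -
  have "{v :: real^'n. \<forall>i. v $ i \<in> \<rat>} = vec_lambda ` (UNIV \<rightarrow>\<^sub>E \<rat>)"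
  proof (intro set_eqI iffI)
    fix v :: "real^'n"
    assume "v \<in> {v. \<forall>i. v $ i \<in> \<rat>}"
    then have "vec_nth v \<in> UNIV \<rightarrow>\<^sub>E \<rat>"
      by auto
    then show "v \<in> vec_lambda ` (UNIV \<rightarrow>\<^sub>E \<rat>)"
      by (metis vec_nth_inverse image_eqI)
  qed auto
  then show ?thesis
    by (simp add: countable_PiE countable_rat)
qed

lemma closure_rational_vectors: "closure {v :: real^'n. \<forall>i. v $ i \<in> \<rat>} = UNIV"
proof -
  have "\<exists>v \<in> {v. \<forall>i. v $ i \<in> \<rat>}. dist v x < e" if "e > 0" for x :: "real^'n" and e
  proof -
    have "\<forall>i. \<exists>r. r \<in> \<rat> \<and> \<bar>r - x $ i\<bar> < e / CARD('n)"
      using \<open>e > 0\<close> by (metis rational_approximation divide_pos_pos zero_less_card_finite of_nat_0_less_iff)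
    then obtain q where q: "\<And>i. q i \<in> \<rat>" "\<And>i. \<bar>q i - x $ i\<bar> < e / CARD('n)"
      by metis
    have "dist (\<chi> i. q i) x \<le> (\<Sum>i\<in>UNIV. \<bar>q i - x $ i\<bar>)"
      using norm_le_l1_cart[of "(\<chi> i. q i) - x"] by (simp add: dist_norm)
    also have "\<dots> < (\<Sum>i\<in>(UNIV :: 'n set). e / CARD('n))"
      by (intro sum_strict_mono q) auto
    also have "\<dots> = e"
      by simp
    finally show ?thesis
      using q by force
  qed
  then show ?thesis
    by (auto simp: closure_approachable)
qed

lemma interior_eq_empty_if_disjoint_dense:
  assumes "closure T = UNIV" "S \<inter> T = {}"
  shows "interior S = {}"
  using open_Int_closure_eq_empty[OF open_interior, of S T] assms interior_subset by blast

lemma closure_eq_UNIV_if_negligible_Compl: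
  fixes S :: "'a::euclidean_space set"
  assumes "negligible (- S)"
  shows "closure S = UNIV"
proof -
  have "interior (- S) = {}"
    using assms open_not_negligible negligible_subset interior_subset open_interior by metis
  then show ?thesis
    by (simp add: closure_interior)
qed

lemma null_sets_lborel_if_closed_negligible:
  fixes S :: "'a::euclidean_space set"
  assumes "closed S" "negligible S"
  shows "S \<in> null_sets lborel"
  using assms null_sets_completion_iff[of S lborel]
  by (simp add: negligible_iff_null_sets borel_closed)

lemma plus_sphere_disjoint_iff:
  fixes S T :: "'a::real_normed_vector set"
  shows "(S + sphere 0 r) \<inter> T = {} \<longleftrightarrow> S \<inter> (\<Union>q\<in>T. sphere q r) = {}"
proof -
  have "q \<in> S + sphere 0 r \<longleftrightarrow> (\<exists>a \<in> S. a \<in> sphere q r)" for q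
    unfolding set_plus_def by (force simp: dist_norm intro: exI[of _ "q - _"])
  then show ?thesis
    by blast
qed

lemma Compl_Aset: "- Aset = (\<Union>q\<in>Q2. sphere q 1)"
  by (simp add: Aset_def)

lemma countable_Q2: "countable Q2"
  unfolding Q2_def by (rule countable_rational_vectors)

lemma closure_Q2: "closure Q2 = UNIV"
  unfolding Q2_def by (rule closure_rational_vectors)

lemma fsigma_Compl_Aset: "fsigma_in euclidean (- Aset)"
  unfolding Compl_Aset
  by (intro fsigma_in_Union countable_image countable_Q2) (auto intro: closed_imp_fsigma_in)

lemma null_sets_Compl_Aset: "- Aset \<in> null_sets lborel"
  unfolding Compl_Aset
  by (intro null_sets_UN' countable_Q2 null_sets_lborel_if_closed_negligible negligible_sphere)
     simp

theorem mainTheorem9: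
  shows "closure Aset = UNIV \<and> gdelta_in euclidean Aset \<and>
         - Aset \<in> null_sets lborel \<and>
         (Aset + sphere (0::real^2) 1) \<inter> Q2 = {} \<and>
         interior (Aset + sphere (0::real^2) 1) = {}"
proof -
  have disjoint: "(Aset + sphere (0::real^2) 1) \<inter> Q2 = {}"
    by (simp add: plus_sphere_disjoint_iff flip: Compl_Aset)
  have "negligible (- Aset)"
    using null_sets_Compl_Aset by (simp add: negligible_iff_null_sets null_sets_completionI)
  moreover have "gdelta_in euclidean Aset"
    using fsigma_Compl_Aset by (simp add: gdelta_in_fsigma_in Compl_eq_Diff_UNIV)
  moreover have "interior (Aset + sphere (0::real^2) 1) = {}"
    using interior_eq_empty_if_disjoint_dense[OF closure_Q2 disjoint] .
  ultimately show ?thesis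
    using closure_eq_UNIV_if_negligible_Compl null_sets_Compl_Aset disjoint by blast
qed

end
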